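(* Fix a valid ILA model and a secret parameter $\mathsf{sp}\in\mathcal{SP}$. Let $\Gamma$ be a typing context, $e$ an expression and $\tau$ a type such that $\mathsf{topub}(\mathsf{sp});\Gamma\vdash e:\tau$. Then $\mathsf{sp};\Gamma\vDash e:\tau$; that is, for every substitution $\gamma$ with $\mathsf{sp};\Gamma\vDash\gamma$, there exists a value $v$ with $\langle\gamma,e\rangle\Downarrow v$ and $v\in[\![\tau]\!]^{\mathsf{sp}}$.
   Context: An ILA model consists of: sets $\mathcal{PP}$ (public parameters) and $\mathcal{SP}$ (secret parameters) with a map $\mathsf{topub}:\mathcal{SP}\to\mathcal{PP}$; for each sort $s\in\{\mathsf{msg},\mathsf{plain},\mathsf{cipher}\}$ a carrier set $[\![s]\!]$ (the sort of a value $v$, written $\mathsf{sort}(v)$, is the $s$ with $v\in[\![s]\!]$) and a partially ordered set $(B_s,\le_s)$ of bounds; maps $|\cdot|^{\mathsf{pp}}_{\mathsf{msg}}:[\![\mathsf{msg}]\!]\to B_{\mathsf{msg}}$, $|\cdot|^{\mathsf{pp}}_{\mathsf{plain}}:[\![\mathsf{plain}]\!]\to B_{\mathsf{plain}}$ for $\mathsf{pp}\in\mathcal{PP}$, and $|\cdot|^{\mathsf{sp}}_{\mathsf{cipher}}:[\![\mathsf{cipher}]\!]\to B_{\mathsf{cipher}}$ for $\mathsf{sp}\in\mathcal{SP}$ (for $s\in\{\mathsf{msg},\mathsf{plain}\}$, $|\cdot|^{\mathsf{sp}}_s$ means $|\cdot|^{\mathsf{topub}(\mathsf{sp})}_s$);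 interpretation maps $\mathsf{interp}^{\mathsf{pp}}_{\mathsf{plain}}:[\![\mathsf{plain}]\!]\to[\![\mathsf{msg}]\!]$, $\mathsf{interp}^{\mathsf{sp}}_{\mathsf{cipher}}:[\![\mathsf{cipher}]\!]\to[\![\mathsf{msg}]\!]$, with $\mathsf{interp}^{\mathsf{pp}}_{\mathsf{msg}}$ the identity and $\mathsf{interp}^{\mathsf{sp}}_s:=\mathsf{interp}^{\mathsf{topub}(\mathsf{sp})}_s$ for $s\in\{\mathsf{msg},\mathsf{plain}\}$; and a set of operations, each $\mathsf{op}$ having an arity $s_1,\dots,s_n\to s$ and equipped with a total function $[\![\mathsf{op}]\!]:\prod_i[\![s_i]\!]\to[\![s]\!]$, a partial function $[\![\mathsf{op}]\!]^{\mathsf{pp}}_{\mathsf{bnd}}:\prod_i B_{s_i}\rightharpoonup B_s$ for each $\mathsf{pp}$, and a function $[\![\mathsf{op}]\!]_{\mathsf{msg}}:[\![\mathsf{msg}]\!]^n\to[\![\mathsf{msg}]\!]$. There is a nullary operation $\mathsf{true}:()\to\mathsf{msg}$. The model is valid if (Commutativity) for all $\mathsf{sp}$, all $\mathsf{op}:\vec s_i\to s$ and all $v_i\in[\![s_i]\!]$, if $[\![\mathsf{op}]\!]^{\mathsf{topub}(\mathsf{sp})}_{\mathsf{bnd}}(|v_1|^{\mathsf{sp}}_{s_1},\dots)=b$ is defined then $|[\![\mathsf{op}]\!](\vec v_i)|^{\mathsf{sp}}_s\le_s b$ and $\mathsf{interp}^{\mathsf{sp}}_s([\![\mathsf{op}]\!](\vec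 v_i))=[\![\mathsf{op}]\!]_{\mathsf{msg}}(\mathsf{interp}^{\mathsf{sp}}_{s_1}(v_1),\dots)$; and (Downwards Closed) if $[\![\mathsf{op}]\!]^{\mathsf{topub}(\mathsf{sp})}_{\mathsf{bnd}}(\vec b_i)=b$ is defined and $b_i'\le_{s_i}b_i$ for all $i$, then $[\![\mathsf{op}]\!]^{\mathsf{topub}(\mathsf{sp})}_{\mathsf{bnd}}(\vec b_i')=b'$ is defined with $b'\le_s b$. Syntax: expressions $e::=x\mid v\mid\mathsf{op}(e_1,\dots,e_n)$ where $x$ is a variable and $v\in[\![s]\!]$ with $s\in\{\mathsf{msg},\mathsf{plain}\}$. A substitution $\gamma$ maps variables to values in $[\![\mathsf{msg}]\!]\cup[\![\mathsf{plain}]\!]\cup[\![\mathsf{cipher}]\!]$. Big-step evaluation $\langle\gamma,e\rangle\Downarrow v$: $\langle\gamma,x\rangle\Downarrow\gamma(x)$; $\langle\gamma,v\rangle\Downarrow v$; if $\mathsf{op}:\vec s_i\to s$ and $\langle\gamma,e_i\rangle\Downarrow v_i\in[\![s_i]\!]$ for all $i$, then $\langle\gamma,\mathsf{op}(\vec e_i)\rangle\Downarrow[\![\mathsf{op}]\!](\vec v_i)$. Types are $s\ \alpha$ with $s$ a sort and $\alpha\in B_s$; $|s\ \alpha|=\alpha$, $\mathsf{sort}(s\ \alpha)=s$; subtyping $s\ \alpha\le s\ \alpha'$ iff $\alpha\le_s\alpha'$. A context $\Gamma$ is a finite map from variables to types. Typing $\mathsf{pp};\Gamma\vdash e:\tau$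 is given by: if $x:\tau\in\Gamma$ then $\mathsf{pp};\Gamma\vdash x:\tau$; if $\mathsf{pp};\Gamma\vdash e:\tau$ and $\tau\le\tau'$ then $\mathsf{pp};\Gamma\vdash e:\tau'$; if $\mathsf{sort}(v)=s$ then $\mathsf{pp};\Gamma\vdash v:s\ |v|^{\mathsf{pp}}_s$; if $\mathsf{op}:\vec s_i\to s$, $\mathsf{pp};\Gamma\vdash e_i:\tau_i$ with $\mathsf{sort}(\tau_i)=s_i$ for all $i$, and $[\![\mathsf{op}]\!]^{\mathsf{pp}}_{\mathsf{bnd}}(|\tau_1|,\dots,|\tau_n|)=\alpha$ is defined, then $\mathsf{pp};\Gamma\vdash\mathsf{op}(\vec e_i):s\ \alpha$. Semantic types: $[\![s\ \alpha]\!]^{\mathsf{sp}}=\{v\in[\![s]\!]\mid |v|^{\mathsf{sp}}_s\le_s\alpha\}$. $\mathsf{sp};\Gamma\vDash\gamma$ means: for every $x$ in the domain of $\Gamma$, $x$ is in the domain of $\gamma$ and $\gamma(x)\in[\![\Gamma(x)]\!]^{\mathsf{sp}}$. *)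

theory Defs
  imports Main
begin

datatype sort = Msg | Plain | Cipher

datatype ('m, 'p, 'c) val = VMsg 'm | VPlain 'p | VCipher 'c

datatype ('bm, 'bp, 'bc) bnd = BMsg 'bm | BPlain 'bp | BCipher 'bc

fun val_sort :: "('m, 'p, 'c) val \<Rightarrow> sort" where
  "val_sort (VMsg _) = Msg" | "val_sort (VPlain _) = Plain" | "val_sort (VCipher _) = Cipher"

fun bnd_sort :: "('bm, 'bp, 'bc) bnd \<Rightarrow> sort" where
  "bnd_sort (BMsg _) = Msg" | "bnd_sort (BPlain _) = Plain" | "bnd_sort (BCipher _) = Cipher"

fun bnd_le :: "('bm::order, 'bp::order, 'bc::order) bnd \<Rightarrow> ('bm, 'bp, 'bc) bnd \<Rightarrow> bool" where
  "bnd_le (BMsg a) (BMsg b) = (a \<le> b)"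
| "bnd_le (BPlain a) (BPlain b) = (a \<le> b)"
| "bnd_le (BCipher a) (BCipher b) = (a \<le> b)"
| "bnd_le _ _ = False"

record ('pp, 'sp, 'm, 'p, 'c, 'bm, 'bp, 'bc, 'o) ila =
  topub :: "'sp \<Rightarrow> 'pp"
  size_msg :: "'pp \<Rightarrow> 'm \<Rightarrow> 'bm"
  size_plain :: "'pp \<Rightarrow> 'p \<Rightarrow> 'bp"
  size_cipher :: "'sp \<Rightarrow> 'c \<Rightarrow> 'bc"
  interp_plain :: "'pp \<Rightarrow> 'p \<Rightarrow> 'm"
  interp_cipher :: "'sp \<Rightarrow> 'c \<Rightarrow> 'm"
  arity :: "'o \<Rightarrow> sort list \<times> sort"
  op_sem :: "'o \<Rightarrow> ('m, 'p, 'c) val list \<Rightarrow> ('m, 'p, 'c) val"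
  op_bnd :: "'pp \<Rightarrow> 'o \<Rightarrow> ('bm, 'bp, 'bc) bnd list \<Rightarrow> ('bm, 'bp, 'bc) bnd option"
  op_msg :: "'o \<Rightarrow> 'm list \<Rightarrow> 'm"
  true_op :: 'o

fun vsize :: "('pp, 'sp, 'm, 'p, 'c, 'bm, 'bp, 'bc, 'o) ila \<Rightarrow> 'sp \<Rightarrow> ('m, 'p, 'c) val \<Rightarrow> ('bm, 'bp, 'bc) bnd" where
  "vsize M sp (VMsg m) = BMsg (size_msg M (topub M sp) m)"
| "vsize M sp (VPlain p) = BPlain (size_plain M (topub M sp) p)"
| "vsize M sp (VCipher c) = BCipher (size_cipher M sp c)"

fun vinterp :: "('pp, 'sp, 'm, 'p, 'c, 'bm, 'bp, 'bc, 'o) ila \<Rightarrow> 'sp \<Rightarrow> ('m, 'p, 'c) val \<Rightarrow> 'm" where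
  "vinterp M sp (VMsg m) = m"
| "vinterp M sp (VPlain p) = interp_plain M (topub M sp) p"
| "vinterp M sp (VCipher c) = interp_cipher M sp c"

definition ila_wf :: "('pp, 'sp, 'm, 'p, 'c, 'bm, 'bp, 'bc, 'o) ila \<Rightarrow> bool" where
  "ila_wf M \<longleftrightarrow>
     arity M (true_op M) = ([], Msg)
   \<and> (\<forall>op vs. map val_sort vs = fst (arity M op)
        \<longrightarrow> val_sort (op_sem M op vs) = snd (arity M op))
   \<and> (\<forall>pp op bs b. map bnd_sort bs = fst (arity M op) \<and> op_bnd M pp op bs = Some b
        \<longrightarrow> bnd_sort b = snd (arity M op))"

definition ila_commutative :: "('pp, 'sp, 'm, 'p, 'c, 'bm::order, 'bp::order, 'bc::order, 'o) ila \<Rightarrow> bool" where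
  "ila_commutative M \<longleftrightarrow>
     (\<forall>sp op vs b. map val_sort vs = fst (arity M op)
        \<and> op_bnd M (topub M sp) op (map (vsize M sp) vs) = Some b
        \<longrightarrow> bnd_le (vsize M sp (op_sem M op vs)) b
          \<and> vinterp M sp (op_sem M op vs) = op_msg M op (map (vinterp M sp) vs))"

definition ila_downwards_closed :: "('pp, 'sp, 'm, 'p, 'c, 'bm::order, 'bp::order, 'bc::order, 'o) ila \<Rightarrow> bool" where
  "ila_downwards_closed M \<longleftrightarrow>
     (\<forall>sp op bs bs' b. map bnd_sort bs = fst (arity M op)
        \<and> op_bnd M (topub M sp) op bs = Some b
        \<and> list_all2 bnd_le bs' bs
        \<longrightarrow> (\<exists>b'. op_bnd M (topub M sp) op bs' = Some b' \<and> bnd_le b' b))"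

definition ila_valid :: "('pp, 'sp, 'm, 'p, 'c, 'bm::order, 'bp::order, 'bc::order, 'o) ila \<Rightarrow> bool" where
  "ila_valid M \<longleftrightarrow> ila_wf M \<and> ila_commutative M \<and> ila_downwards_closed M"

datatype ('x, 'm, 'p, 'o) expr =
    Var 'x
  | ConstMsg 'm
  | ConstPlain 'p
  | Op 'o "('x, 'm, 'p, 'o) expr list"

inductive eval :: "('pp, 'sp, 'm, 'p, 'c, 'bm, 'bp, 'bc, 'o) ila \<Rightarrow> ('x \<Rightarrow> ('m, 'p, 'c) val option)
    \<Rightarrow> ('x, 'm, 'p, 'o) expr \<Rightarrow> ('m, 'p, 'c) val \<Rightarrow> bool"
  for M where
  eval_var: "\<gamma> x = Some v \<Longrightarrow> eval M \<gamma> (Var x) v"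
| eval_msg: "eval M \<gamma> (ConstMsg m) (VMsg m)"
| eval_plain: "eval M \<gamma> (ConstPlain p) (VPlain p)"
| eval_op: "\<lbrakk> list_all2 (eval M \<gamma>) es vs; map val_sort vs = fst (arity M op) \<rbrakk>
     \<Longrightarrow> eval M \<gamma> (Op op es) (op_sem M op vs)"

text \<open>Types s alpha are represented by sort-tagged bounds; typing contexts are partial maps.\<close>
inductive typing :: "('pp, 'sp, 'm, 'p, 'c, 'bm::order, 'bp::order, 'bc::order, 'o) ila \<Rightarrow> 'pp
    \<Rightarrow> ('x \<Rightarrow> ('bm, 'bp, 'bc) bnd option) \<Rightarrow> ('x, 'm, 'p, 'o) expr \<Rightarrow> ('bm, 'bp, 'bc) bnd \<Rightarrow> bool"
  for M pp \<Gamma> where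
  ty_var: "\<Gamma> x = Some \<tau> \<Longrightarrow> typing M pp \<Gamma> (Var x) \<tau>"
| ty_sub: "\<lbrakk> typing M pp \<Gamma> e \<tau>; bnd_le \<tau> \<tau>' \<rbrakk> \<Longrightarrow> typing M pp \<Gamma> e \<tau>'"
| ty_msg: "typing M pp \<Gamma> (ConstMsg m) (BMsg (size_msg M pp m))"
| ty_plain: "typing M pp \<Gamma> (ConstPlain p) (BPlain (size_plain M pp p))"
| ty_op: "\<lbrakk> list_all2 (typing M pp \<Gamma>) es \<tau>s; map bnd_sort \<tau>s = fst (arity M op);
            op_bnd M pp op \<tau>s = Some \<alpha> \<rbrakk>
     \<Longrightarrow> typing M pp \<Gamma> (Op op es) \<alpha>"

definition sem_ty :: "('pp, 'sp, 'm, 'p, 'c, 'bm::order, 'bp::order, 'bc::order, 'o) ila \<Rightarrow> 'sp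
    \<Rightarrow> ('bm, 'bp, 'bc) bnd \<Rightarrow> ('m, 'p, 'c) val set" where
  "sem_ty M sp \<tau> = {v. val_sort v = bnd_sort \<tau> \<and> bnd_le (vsize M sp v) \<tau>}"

definition sem_ctx :: "('pp, 'sp, 'm, 'p, 'c, 'bm::order, 'bp::order, 'bc::order, 'o) ila \<Rightarrow> 'sp
    \<Rightarrow> ('x \<Rightarrow> ('bm, 'bp, 'bc) bnd option) \<Rightarrow> ('x \<Rightarrow> ('m, 'p, 'c) val option) \<Rightarrow> bool" where
  "sem_ctx M sp \<Gamma> \<gamma> \<longleftrightarrow> (\<forall>x \<tau>. \<Gamma> x = Some \<tau> \<longrightarrow> (\<exists>v. \<gamma> x = Some v \<and> v \<in> sem_ty M sp \<tau>))"

end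

theory Submission
  imports Defs
begin

text \<open>Subsumption is sound because semantic types are
  downward closed in the bound; for an operation, Downwards Closure lets the operation's bound
  be evaluated at the actual sizes of the argument values, and Commutativity then bounds the
  size of the result by it.\<close>

lemma bnd_le_refl: "bnd_le b b"
  by (cases b) auto

lemma bnd_le_trans: "bnd_le a b \<Longrightarrow> bnd_le b c \<Longrightarrow> bnd_le a c"
  by (cases a; cases b; cases c) auto

lemma bnd_le_sort_eq: "bnd_le a b \<Longrightarrow> bnd_sort a = bnd_sort b"
  by (cases a; cases b) auto

lemma bnd_sort_vsize [simp]: "bnd_sort (vsize M sp v) = val_sort v"
  by (cases v) auto

lemma sem_ty_iff_vsize_le: "v \<in> sem_ty M sp \<tau> \<longleftrightarrow> bnd_le (vsize M sp v) \<tau>"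
  unfolding sem_ty_def by (auto dest: bnd_le_sort_eq)

lemma vsize_in_sem_ty: "v \<in> sem_ty M sp (vsize M sp v)"
  by (simp add: sem_ty_iff_vsize_le bnd_le_refl)

lemma sem_ty_mono: "bnd_le \<tau> \<tau>' \<Longrightarrow> v \<in> sem_ty M sp \<tau> \<Longrightarrow> v \<in> sem_ty M sp \<tau>'"
  by (auto simp: sem_ty_iff_vsize_le intro: bnd_le_trans)

lemma list_all2_sem_ty_sorts_eq:
  "list_all2 (\<lambda>v \<tau>. v \<in> sem_ty M sp \<tau>) vs \<tau>s \<Longrightarrow> map val_sort vs = map bnd_sort \<tau>s"
  by (induction rule: list_all2_induct) (simp_all add: sem_ty_def)

lemma op_sem_in_sem_ty:
  assumes comm: "ila_commutative M" and down: "ila_downwards_closed M"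
    and args: "list_all2 (\<lambda>v \<tau>. v \<in> sem_ty M sp \<tau>) vs \<tau>s"
    and arity: "map bnd_sort \<tau>s = fst (arity M op)"
    and bound: "op_bnd M (topub M sp) op \<tau>s = Some \<alpha>"
  shows "op_sem M op vs \<in> sem_ty M sp \<alpha>"
proof -
  have sizes_le: "list_all2 bnd_le (map (vsize M sp) vs) \<tau>s"
    using args by (simp add: list_all2_map1 sem_ty_iff_vsize_le)
  have val_arity: "map val_sort vs = fst (arity M op)"
    using list_all2_sem_ty_sorts_eq[OF args] arity by simp
  obtain \<beta> where \<beta>: "op_bnd M (topub M sp) op (map (vsize M sp) vs) = Some \<beta>" "bnd_le \<beta> \<alpha>"
    using down arity bound sizes_le unfolding ila_downwards_closed_def by blast
  have "bnd_le (vsize M sp (op_sem M op vs)) \<beta>"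
    using comm val_arity \<beta>(1) unfolding ila_commutative_def by blast
  with \<beta>(2) show ?thesis
    by (auto simp: sem_ty_iff_vsize_le intro: bnd_le_trans)
qed

theorem typing_sound:
  assumes valid: "ila_valid M" and ctx: "sem_ctx M sp \<Gamma> \<gamma>"
    and "typing M (topub M sp) \<Gamma> e \<tau>"
  shows "\<exists>v. eval M \<gamma> e v \<and> v \<in> sem_ty M sp \<tau>"
  using \<open>typing M (topub M sp) \<Gamma> e \<tau>\<close>
proof (induction rule: typing.induct)
  case (ty_var x \<tau>)
  then show ?case
    using ctx unfolding sem_ctx_def by (blast intro: eval_var)
next
  case (ty_sub e \<tau> \<tau>')
  then show ?case by (blast intro: sem_ty_mono)
next
  case (ty_msg m)
  show ?case using vsize_in_sem_ty[of "VMsg m" M sp] by (auto intro: eval_msg)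
next
  case (ty_plain p)
  show ?case using vsize_in_sem_ty[of "VPlain p" M sp] by (auto intro: eval_plain)
next
  case (ty_op es \<tau>s op \<alpha>)
  have "list_all2 (eval M \<gamma> OO (\<lambda>v \<tau>. v \<in> sem_ty M sp \<tau>)) es \<tau>s"
    using ty_op.IH by (rule list_all2_mono) (blast intro: relcomppI)
  then obtain vs where evals: "list_all2 (eval M \<gamma>) es vs"
    and typed: "list_all2 (\<lambda>v \<tau>. v \<in> sem_ty M sp \<tau>) vs \<tau>s"
    unfolding list.rel_compp by blast
  from valid have comm: "ila_commutative M" and down: "ila_downwards_closed M"
    unfolding ila_valid_def by auto
  have "map val_sort vs = fst (arity M op)"
    using list_all2_sem_ty_sorts_eq[OF typed] \<open>map bnd_sort \<tau>s = fst (arity M op)\<close> by simp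
  with evals have "eval M \<gamma> (Op op es) (op_sem M op vs)"
    by (rule eval_op)
  moreover have "op_sem M op vs \<in> sem_ty M sp \<alpha>"
    using op_sem_in_sem_ty[OF comm down typed] ty_op.hyps by blast
  ultimately show ?case by blast
qed

theorem mainTheorem1:
  fixes M :: "('pp, 'sp, 'm, 'p, 'c, 'bm::order, 'bp::order, 'bc::order, 'o) ila"
    and sp :: 'sp
    and \<Gamma> :: "'x \<Rightarrow> ('bm, 'bp, 'bc) bnd option"
    and e :: "('x, 'm, 'p, 'o) expr"
    and \<tau> :: "('bm, 'bp, 'bc) bnd"
  assumes "ila_valid M"
    and "finite (dom \<Gamma>)"
    and "typing M (topub M sp) \<Gamma> e \<tau>"
  shows "\<forall>\<gamma>. sem_ctx M sp \<Gamma> \<gamma> \<longrightarrow> (\<exists>v. eval M \<gamma> e v \<and> v \<in> sem_ty M sp \<tau>)"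
  using typing_sound[OF assms(1) _ assms(3)] by blast

end
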